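(* Let $G=(N,A)$ be an $s$-$t$ DAG and let $X$ be a sequence of nodes of $G$. The following statements are equivalent: (1) $X$ is safe for path covers of $G$. (2) There is a node $u\in N$ such that every $s$-$t$ path of $G$ containing $u$ contains $X$ (as a subsequence). (3) There is a node $v\in N$ such that $X$ is contained in the sequence obtained as the concatenation of the sequence of $s$-$v$ cutnodes with the sequence of $v$-$t$ cutnodes.
   Context: An $s$-$t$ DAG is a directed acyclic graph with a unique source $s$ and a unique sink $t$ such that every node is reachable from $s$ and every node reaches $t$. A sequence of nodes $X=u_1,\dots,u_\ell$ is a list of nodes such that there is a $u_i$-$u_{i+1}$ path for all $1\le i\le \ell-1$ (in particular a path is a sequence). $X$ is contained in (is a subsequence of) a sequence $Y$ if every node of $X$ occurs in $Y$. A path cover of $G$ is a set $P$ of $s$-$t$ paths such that every node of $G$ lies on some path of $P$. A sequence $X$ is safe (for path covers) if for every path cover $P$ of $G$, $X$ is a subsequence of some path of $P$; by convention, if no $s$-$t$ path contains $X$, then $X$ is unsafe. A node $w$ is a $u$-$v$ cutnode if every $u$-$v$ path contains $w$ (in particular $u$ and $v$ are $u$-$v$ cutnodes); the $u$-$v$ cutnodes appear in the same order on every $u$-$v$ path, giving the sequence of $u$-$v$ cutnodes. The concatenation of a sequence ending in $v$ with a sequence starting at $v$ lists the first sequence followed by the second with the repeated occurrence of $v$ removed. *)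

theory Defs
  imports Main
begin

definition st_dag :: "'a set \<Rightarrow> ('a \<times> 'a) set \<Rightarrow> 'a \<Rightarrow> 'a \<Rightarrow> bool" where
  "st_dag N A s t \<longleftrightarrow> finite N \<and> A \<subseteq> N \<times> N \<and> acyclic A \<and> s \<in> N \<and> t \<in> N
     \<and> (\<forall>v\<in>N. (v, s) \<notin> A) \<and> (\<forall>v\<in>N. (t, v) \<notin> A)
     \<and> (\<forall>v\<in>N. (s, v) \<in> A\<^sup>*) \<and> (\<forall>v\<in>N. (v, t) \<in> A\<^sup>*)"

definition is_path :: "'a set \<Rightarrow> ('a \<times> 'a) set \<Rightarrow> 'a list \<Rightarrow> bool" where
  "is_path N A p \<longleftrightarrow> p \<noteq> [] \<and> set p \<subseteq> N \<and> successively (\<lambda>x y. (x, y) \<in> A) p"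

definition uv_path :: "'a set \<Rightarrow> ('a \<times> 'a) set \<Rightarrow> 'a \<Rightarrow> 'a \<Rightarrow> 'a list \<Rightarrow> bool" where
  "uv_path N A u v p \<longleftrightarrow> is_path N A p \<and> hd p = u \<and> last p = v"

definition is_sequence :: "'a set \<Rightarrow> ('a \<times> 'a) set \<Rightarrow> 'a list \<Rightarrow> bool" where
  "is_sequence N A X \<longleftrightarrow> set X \<subseteq> N \<and>
     successively (\<lambda>x y. \<exists>p. uv_path N A x y p) X"

text \<open>X is contained in Y if every node of X occurs in Y (paper's definition).\<close>
definition contained :: "'a list \<Rightarrow> 'a list \<Rightarrow> bool" where
  "contained X Y \<longleftrightarrow> set X \<subseteq> set Y"

definition path_cover :: "'a set \<Rightarrow> ('a \<times> 'a) set \<Rightarrow> 'a \<Rightarrow> 'a \<Rightarrow> 'a list set \<Rightarrow> bool" where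
  "path_cover N A s t P \<longleftrightarrow> (\<forall>p\<in>P. uv_path N A s t p) \<and> (\<forall>w\<in>N. \<exists>p\<in>P. w \<in> set p)"

definition safe :: "'a set \<Rightarrow> ('a \<times> 'a) set \<Rightarrow> 'a \<Rightarrow> 'a \<Rightarrow> 'a list \<Rightarrow> bool" where
  "safe N A s t X \<longleftrightarrow> (\<exists>p. uv_path N A s t p \<and> contained X p) \<and>
     (\<forall>P. path_cover N A s t P \<longrightarrow> (\<exists>p\<in>P. contained X p))"

definition cutnode :: "'a set \<Rightarrow> ('a \<times> 'a) set \<Rightarrow> 'a \<Rightarrow> 'a \<Rightarrow> 'a \<Rightarrow> bool" where
  "cutnode N A u v w \<longleftrightarrow> (\<forall>p. uv_path N A u v p \<longrightarrow> w \<in> set p)"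

text \<open>The sequence of u-v cutnodes: the cutnodes in the order in which they appear
  on (any, hence a chosen) u-v path.\<close>
definition cut_seq :: "'a set \<Rightarrow> ('a \<times> 'a) set \<Rightarrow> 'a \<Rightarrow> 'a \<Rightarrow> 'a list" where
  "cut_seq N A u v = filter (cutnode N A u v) (SOME p. uv_path N A u v p)"

text \<open>Concatenation of a sequence ending in v with one starting in v (v not repeated).\<close>
definition seq_concat :: "'a list \<Rightarrow> 'a list \<Rightarrow> 'a list" where
  "seq_concat X Y = X @ tl Y"

end

theory Submission
  imports Defs
begin

text \<open>If some node \<open>u\<close> forces \<open>X\<close>, i.e. every \<open>s\<close>-\<open>t\<close> path through \<open>u\<close> contains \<open>X\<close>,
  then \<open>X\<close> is safe, since every path cover has a path through \<open>u\<close>. Conversely, if no node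
  forces \<open>X\<close>, choosing for every node an \<open>s\<close>-\<open>t\<close> path through it that misses \<open>X\<close> yields a
  path cover witnessing that \<open>X\<close> is unsafe. Finally, the \<open>s\<close>-\<open>t\<close> paths through \<open>v\<close> are
  exactly the concatenations of \<open>s\<close>-\<open>v\<close> and \<open>v\<close>-\<open>t\<close> paths, so the nodes common to all of
  them are the \<open>s\<close>-\<open>v\<close> and the \<open>v\<close>-\<open>t\<close> cutnodes.\<close>

lemma uv_path_singleton: "u \<in> N \<Longrightarrow> uv_path N A u u [u]"
  by (simp add: uv_path_def is_path_def)

lemma uv_path_snoc:
  assumes "uv_path N A u v p" "(v, w) \<in> A" "w \<in> N"
  shows "uv_path N A u w (p @ [w])"
  using assms by (auto simp: uv_path_def is_path_def successively_append_iff)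

lemma uv_path_if_rtrancl:
  assumes "(u, v) \<in> A\<^sup>*" "u \<in> N" "A \<subseteq> N \<times> N"
  shows "\<exists>p. uv_path N A u v p"
  using assms(1)
proof (induction rule: rtrancl_induct)
  case base
  show ?case using uv_path_singleton[OF assms(2)] by blast
next
  case (step v w)
  then obtain p where p: "uv_path N A u v p"
    by blast
  have "w \<in> N"
    using step.hyps(2) assms(3) by blast
  then have "uv_path N A u w (p @ [w])"
    by (rule uv_path_snoc[OF p step.hyps(2)])
  then show ?case ..
qed

lemma uv_path_Cons_tl: "uv_path N A u v p \<Longrightarrow> p = u # tl p"
  by (cases p) (auto simp: uv_path_def is_path_def)

lemma hd_last_in_set_uv_path: "uv_path N A u v p \<Longrightarrow> u \<in> set p \<and> v \<in> set p"
  by (auto simp: uv_path_def is_path_def)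

lemma uv_path_append:
  assumes "uv_path N A u v p" "uv_path N A v w q"
  shows "uv_path N A u w (p @ tl q)"
proof -
  obtain q' where q: "q = v # q'"
    using uv_path_Cons_tl[OF assms(2)] by blast
  then show ?thesis
    using assms
    by (cases q') (auto simp: uv_path_def is_path_def successively_append_iff successively_Cons)
qed

lemma uv_path_split:
  assumes "uv_path N A u w p" "v \<in> set p"
  obtains a b where "p = a @ v # b" "uv_path N A u v (a @ [v])" "uv_path N A v w (v # b)"
proof -
  obtain a b where p: "p = a @ v # b"
    using split_list[OF assms(2)] by blast
  have "successively (\<lambda>x y. (x, y) \<in> A) (a @ [v])" "successively (\<lambda>x y. (x, y) \<in> A) (v # b)"
    using assms(1) unfolding p uv_path_def is_path_def
    by (auto simp: successively_append_iff successively_Cons)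
  then have "uv_path N A u v (a @ [v])" "uv_path N A v w (v # b)"
    using assms(1) unfolding p uv_path_def is_path_def
    by (auto simp: hd_append split: if_splits)
  with p that show ?thesis by blast
qed

lemma st_dag_uv_paths:
  assumes "st_dag N A s t" "v \<in> N"
  shows "\<exists>p. uv_path N A s v p" "\<exists>q. uv_path N A v t q"
proof -
  have "A \<subseteq> N \<times> N" "s \<in> N" "(s, v) \<in> A\<^sup>*" "(v, t) \<in> A\<^sup>*"
    using assms unfolding st_dag_def by auto
  then show "\<exists>p. uv_path N A s v p" "\<exists>q. uv_path N A v t q"
    using uv_path_if_rtrancl[of s v A N] uv_path_if_rtrancl[of v t A N] assms(2) by auto
qed

lemma st_dag_path_through:
  assumes "st_dag N A s t" "v \<in> N"
  shows "\<exists>p. uv_path N A s t p \<and> v \<in> set p"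
proof -
  obtain p q where "uv_path N A s v p" "uv_path N A v t q"
    using st_dag_uv_paths[OF assms] by blast
  then have "uv_path N A s t (p @ tl q)" "v \<in> set (p @ tl q)"
    using uv_path_append hd_last_in_set_uv_path[of N A s v p] by auto
  then show ?thesis
    by blast
qed

lemma safe_iff_ex_forcing_node:
  assumes "\<forall>u\<in>N. \<exists>p. uv_path N A s t p \<and> u \<in> set p"
  shows "safe N A s t X \<longleftrightarrow>
           (\<exists>u\<in>N. \<forall>p. uv_path N A s t p \<and> u \<in> set p \<longrightarrow> contained X p)"
proof
  assume safe: "safe N A s t X"
  show "\<exists>u\<in>N. \<forall>p. uv_path N A s t p \<and> u \<in> set p \<longrightarrow> contained X p"
  proof (rule ccontr)
    assume "\<not> ?thesis"
    then obtain f where f: "\<And>u. u \<in> N \<Longrightarrow>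
        uv_path N A s t (f u) \<and> u \<in> set (f u) \<and> \<not> contained X (f u)"
      by metis
    then have "path_cover N A s t (f ` N)"
      unfolding path_cover_def by blast
    then show False
      using safe f unfolding safe_def by blast
  qed
next
  assume "\<exists>u\<in>N. \<forall>p. uv_path N A s t p \<and> u \<in> set p \<longrightarrow> contained X p"
  then obtain u where "u \<in> N" "\<And>p. uv_path N A s t p \<Longrightarrow> u \<in> set p \<Longrightarrow> contained X p"
    by blast
  then show "safe N A s t X"
    using assms unfolding safe_def path_cover_def by blast
qed

lemma all_paths_through_contain_iff_cutnode:
  "(\<forall>p. uv_path N A s t p \<and> v \<in> set p \<longrightarrow> x \<in> set p) \<longleftrightarrow>
     cutnode N A s v x \<or> cutnode N A v t x"
proof
  assume all: "\<forall>p. uv_path N A s t p \<and> v \<in> set p \<longrightarrow> x \<in> set p"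
  show "cutnode N A s v x \<or> cutnode N A v t x"
  proof (rule ccontr)
    assume "\<not> ?thesis"
    then obtain p q where p: "uv_path N A s v p" "x \<notin> set p"
      and q: "uv_path N A v t q" "x \<notin> set q"
      unfolding cutnode_def by blast
    have "uv_path N A s t (p @ tl q)" "v \<in> set (p @ tl q)"
      using uv_path_append[OF p(1) q(1)] hd_last_in_set_uv_path[OF p(1)] by auto
    moreover have "x \<notin> set (p @ tl q)"
      using p(2) q(2) by (cases q) auto
    ultimately show False
      using all by blast
  qed
next
  assume "cutnode N A s v x \<or> cutnode N A v t x"
  show "\<forall>p. uv_path N A s t p \<and> v \<in> set p \<longrightarrow> x \<in> set p"
  proof (intro allI impI)
    fix p
    assume "uv_path N A s t p \<and> v \<in> set p"
    then obtain a b where "p = a @ v # b" "uv_path N A s v (a @ [v])" "uv_path N A v t (v # b)"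
      using uv_path_split by metis
    with \<open>cutnode N A s v x \<or> cutnode N A v t x\<close> show "x \<in> set p"
      unfolding cutnode_def by fastforce
  qed
qed

lemma cutnode_endpoints: "cutnode N A u v u \<and> cutnode N A u v v"
  by (simp add: cutnode_def hd_last_in_set_uv_path)

lemma set_cut_seq:
  assumes "\<exists>p. uv_path N A u v p"
  shows "set (cut_seq N A u v) = {w. cutnode N A u v w}"
proof -
  have "uv_path N A u v (SOME p. uv_path N A u v p)"
    using assms by (rule someI_ex)
  then show ?thesis
    unfolding cut_seq_def cutnode_def by auto
qed

lemma cut_seq_Cons:
  assumes "\<exists>p. uv_path N A u v p"
  obtains ys where "cut_seq N A u v = u # ys"
proof -
  have path: "uv_path N A u v (SOME p. uv_path N A u v p)"
    using assms by (rule someI_ex)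
  have "cut_seq N A u v = u # filter (cutnode N A u v) (tl (SOME p. uv_path N A u v p))"
    unfolding cut_seq_def by (subst uv_path_Cons_tl[OF path]) (simp add: cutnode_endpoints)
  then show ?thesis
    by (rule that)
qed

lemma set_seq_concat: "y \<in> set X \<Longrightarrow> set (seq_concat X (y # ys)) = set X \<union> set (y # ys)"
  by (auto simp: seq_concat_def)

lemma set_seq_concat_cut_seq:
  assumes "st_dag N A s t" "v \<in> N"
  shows "set (seq_concat (cut_seq N A s v) (cut_seq N A v t))
           = {w. cutnode N A s v w \<or> cutnode N A v t w}"
proof -
  note paths = st_dag_uv_paths[OF assms]
  obtain ys where ys: "cut_seq N A v t = v # ys"
    using cut_seq_Cons[OF paths(2)] by blast
  have "v \<in> set (cut_seq N A s v)"
    using set_cut_seq[OF paths(1)] by (simp add: cutnode_endpoints)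
  then have "set (seq_concat (cut_seq N A s v) (cut_seq N A v t))
      = set (cut_seq N A s v) \<union> set (cut_seq N A v t)"
    unfolding ys by (rule set_seq_concat)
  also have "\<dots> = {w. cutnode N A s v w \<or> cutnode N A v t w}"
    using set_cut_seq[OF paths(1)] set_cut_seq[OF paths(2)] by auto
  finally show ?thesis .
qed

lemma forcing_node_iff_contained_cut_seqs:
  assumes "st_dag N A s t" "v \<in> N"
  shows "(\<forall>p. uv_path N A s t p \<and> v \<in> set p \<longrightarrow> contained X p) \<longleftrightarrow>
           contained X (seq_concat (cut_seq N A s v) (cut_seq N A v t))"
proof -
  have "(\<forall>p. uv_path N A s t p \<and> v \<in> set p \<longrightarrow> contained X p) \<longleftrightarrow>
          (\<forall>x\<in>set X. \<forall>p. uv_path N A s t p \<and> v \<in> set p \<longrightarrow> x \<in> set p)"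
    unfolding contained_def by blast
  also have "\<dots> \<longleftrightarrow> (\<forall>x\<in>set X. cutnode N A s v x \<or> cutnode N A v t x)"
    by (simp only: all_paths_through_contain_iff_cutnode)
  also have "\<dots> \<longleftrightarrow> contained X (seq_concat (cut_seq N A s v) (cut_seq N A v t))"
    unfolding contained_def set_seq_concat_cut_seq[OF assms] by blast
  finally show ?thesis .
qed

text \<open>Containment is set inclusion here.\<close>

theorem theorem1:
  assumes "st_dag N A s t"
    and "is_sequence N A X"
  shows "(safe N A s t X \<longleftrightarrow>
           (\<exists>u\<in>N. \<forall>p. uv_path N A s t p \<and> u \<in> set p \<longrightarrow> contained X p))
       \<and> (safe N A s t X \<longleftrightarrow>
           (\<exists>v\<in>N. contained X (seq_concat (cut_seq N A s v) (cut_seq N A v t))))"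
proof -
  have "\<forall>u\<in>N. \<exists>p. uv_path N A s t p \<and> u \<in> set p"
    using st_dag_path_through[OF assms(1)] by blast
  then have "safe N A s t X \<longleftrightarrow>
               (\<exists>u\<in>N. \<forall>p. uv_path N A s t p \<and> u \<in> set p \<longrightarrow> contained X p)"
    by (rule safe_iff_ex_forcing_node)
  moreover have "(\<exists>u\<in>N. \<forall>p. uv_path N A s t p \<and> u \<in> set p \<longrightarrow> contained X p) \<longleftrightarrow>
                   (\<exists>v\<in>N. contained X (seq_concat (cut_seq N A s v) (cut_seq N A v t)))"
    by (rule bex_cong[OF refl forcing_node_iff_contained_cut_seqs[OF assms(1)]])
  ultimately show ?thesis
    by simp
qed

end
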